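(* The algorithm Balance2 is not competitive for the infinite server problem on the real line.
   Context: Infinite server problem on the real line: an unbounded number of servers initially reside at a source point; a finite sequence of requests is revealed one by one; each must be served immediately, without knowledge of future requests, by moving a server to it; the cost is the total distance traveled. Balance2 serves a request $r$ by moving to $r$ a server $x$ minimizing $D_x+2d(x,r)$, where $D_x$ is the cumulative distance traveled by $x$ so far and $d(x,r)$ is its distance to $r$ (servers still at the source have $D_x=0$). An online algorithm is competitive if there are $\rho,c$ with $ALG(\sigma)\le\rho\,OPT(\sigma)+c$ for all request sequences $\sigma$. *)

theory Defs
  imports Complex_Main
begin

text \<open>A Balance2 state is the list of servers that have been used so far, each given by
  (current position, cumulative distance travelled D). All other (infinitely many)
  servers are still at the source with D = 0; index length st denotes such a fresh server.\<close>

type_synonym bstate = "(real \<times> real) list"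

definition cand :: "bstate \<Rightarrow> real \<Rightarrow> real \<Rightarrow> nat \<Rightarrow> real" where
  "cand st s r i = (if i < length st then snd (st ! i) + 2 * \<bar>fst (st ! i) - r\<bar>
                    else 2 * \<bar>s - r\<bar>)"

definition move_cost :: "bstate \<Rightarrow> real \<Rightarrow> real \<Rightarrow> nat \<Rightarrow> real" where
  "move_cost st s r i = (if i < length st then \<bar>fst (st ! i) - r\<bar> else \<bar>s - r\<bar>)"

definition move_state :: "bstate \<Rightarrow> real \<Rightarrow> real \<Rightarrow> nat \<Rightarrow> bstate" where
  "move_state st s r i = (if i < length st
       then st[i := (r, snd (st ! i) + \<bar>fst (st ! i) - r\<bar>)]
       else st @ [(r, \<bar>s - r\<bar>)])"

text \<open>A (deterministic, history-dependent) tie-breaking policy: given the past requests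
  and the current request it names the server to move.\<close>
type_synonym policy = "real list \<Rightarrow> real \<Rightarrow> nat"

fun bal_exec :: "real \<Rightarrow> policy \<Rightarrow> real list \<Rightarrow> nat \<Rightarrow> bstate \<times> real" where
  "bal_exec s pol \<sigma> 0 = ([], 0)"
| "bal_exec s pol \<sigma> (Suc n) =
     (let (st, c) = bal_exec s pol \<sigma> n; r = \<sigma> ! n; i = pol (take n \<sigma>) r
      in (move_state st s r i, c + move_cost st s r i))"

definition balance2_policy :: "real \<Rightarrow> policy \<Rightarrow> bool" where
  "balance2_policy s pol \<longleftrightarrow>
     (\<forall>\<sigma> n. n < length \<sigma> \<longrightarrow>
        (let st = fst (bal_exec s pol \<sigma> n); r = \<sigma> ! n; i = pol (take n \<sigma>) r
         in i \<le> length st \<and> (\<forall>j \<le> length st. cand st s r i \<le> cand st s r j)))"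

definition balance2_cost :: "real \<Rightarrow> policy \<Rightarrow> real list \<Rightarrow> real" where
  "balance2_cost s pol \<sigma> = snd (bal_exec s pol \<sigma> (length \<sigma>))"

text \<open>Offline solutions: request i is served by server f i (servers indexed by nat, all
  starting at s); the server moves from its previous position to the request.\<close>
definition prev_pos :: "real \<Rightarrow> real list \<Rightarrow> (nat \<Rightarrow> nat) \<Rightarrow> nat \<Rightarrow> real" where
  "prev_pos s \<sigma> f i = (if \<exists>j<i. f j = f i then \<sigma> ! (GREATEST j. j < i \<and> f j = f i) else s)"

definition offline_cost :: "real \<Rightarrow> real list \<Rightarrow> (nat \<Rightarrow> nat) \<Rightarrow> real" where
  "offline_cost s \<sigma> f = (\<Sum>i<length \<sigma>. \<bar>\<sigma> ! i - prev_pos s \<sigma> f i\<bar>)"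

definition opt_cost :: "real \<Rightarrow> real list \<Rightarrow> real" where
  "opt_cost s \<sigma> = Inf (range (offline_cost s \<sigma>))"

end

theory Submission
  imports Defs
begin

(* In phase k = 0, ..., m - 1 the adversary alternates 2m requests between s + a_k and
   s + a_k + h_k, where a_k = m - k and h_k = a_k / (2m).  Balance2 serves a whole phase with
   one server: a fresh one for the first request (cost a_k), then that same server shuttling
   at cost h_k, since every server of an earlier phase has already travelled more than
   2 (a_k + h_k), and a fresh server would cost 2 d(s, r) >= 2 a_k.  So Balance2 pays at least
   a_0 + ... + a_(m-1) = m (m + 1) / 2, whereas two servers, one for the requests of each
   parity, move monotonically towards s and pay at most 4m + 1. *)

(* The truncated subtraction keeps the request points nonnegative and antitone in k for all k. *)
definition phase_inner :: "nat \<Rightarrow> nat \<Rightarrow> real" where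
  "phase_inner m k = real (m - k)"

definition phase_gap :: "nat \<Rightarrow> nat \<Rightarrow> real" where
  "phase_gap m k = phase_inner m k / (2 * real m)"

definition phase_outer :: "nat \<Rightarrow> nat \<Rightarrow> real" where
  "phase_outer m k = phase_inner m k + phase_gap m k"

definition phase_point :: "nat \<Rightarrow> nat \<Rightarrow> nat \<Rightarrow> real" where
  "phase_point m k j = (if even j then phase_inner m k else phase_outer m k)"

definition adversary :: "real \<Rightarrow> nat \<Rightarrow> real list" where
  "adversary s m = map (\<lambda>i. s + phase_point m (i div (2 * m)) i) [0..<m * (2 * m)]"

definition active_load :: "nat \<Rightarrow> nat \<Rightarrow> nat \<Rightarrow> real" where
  "active_load m k j = phase_inner m k + real (j - 1) * phase_gap m k"

definition retired_load :: "nat \<Rightarrow> nat \<Rightarrow> real" where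
  "retired_load m k = active_load m k (2 * m)"

definition phase_state :: "real \<Rightarrow> nat \<Rightarrow> nat \<Rightarrow> nat \<Rightarrow> bstate" where
  "phase_state s m k j =
     map (\<lambda>i. (s + phase_outer m i, retired_load m i)) [0..<k] @
     (if j = 0 then [] else [(s + phase_point m k (j - 1), active_load m k j)])"

definition phase_cost :: "nat \<Rightarrow> nat \<Rightarrow> nat \<Rightarrow> real" where
  "phase_cost m k j = (\<Sum>i<k. retired_load m i) + (if j = 0 then 0 else active_load m k j)"

lemma phase_inner_nonneg: "0 \<le> phase_inner m k"
  by (simp add: phase_inner_def)

lemma phase_inner_pos: "k < m \<Longrightarrow> 0 < phase_inner m k"
  by (simp add: phase_inner_def)

lemma phase_gap_nonneg: "0 \<le> phase_gap m k"
  by (simp add: phase_gap_def phase_inner_nonneg)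

lemma phase_gap_pos: "k < m \<Longrightarrow> 0 < phase_gap m k"
  by (simp add: phase_gap_def phase_inner_pos)

lemma phase_inner_eq_gap: "0 < m \<Longrightarrow> phase_inner m k = 2 * real m * phase_gap m k"
  by (simp add: phase_gap_def)

lemma phase_inner_antimono: "k \<le> l \<Longrightarrow> phase_inner m l \<le> phase_inner m k"
  by (simp add: phase_inner_def)

lemma phase_outer_antimono: "k \<le> l \<Longrightarrow> phase_outer m l \<le> phase_outer m k"
  by (simp add: phase_outer_def phase_gap_def phase_inner_antimono add_mono divide_right_mono)

lemma phase_point_nonneg: "0 \<le> phase_point m k j"
  by (simp add: phase_point_def phase_outer_def phase_inner_nonneg phase_gap_nonneg)

lemma phase_point_dist: "\<bar>phase_point m k j - phase_point m k (Suc j)\<bar> = phase_gap m k"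
  by (simp add: phase_point_def phase_outer_def phase_gap_nonneg)

lemma retired_load_gt_outer:
  assumes "i < k" "k < m"
  shows "2 * phase_outer m k < retired_load m i"
proof -
  have m: "0 < real m" using assms by simp
  have inner_i: "phase_inner m k + 1 \<le> phase_inner m i"
    and inner_k: "phase_inner m k \<le> real m - 1"
    using assms by (auto simp: phase_inner_def)
  have "retired_load m i = phase_inner m i * (4 * real m - 1) / (2 * real m)"
    using m by (simp add: retired_load_def active_load_def phase_gap_def field_simps)
  moreover have "2 * phase_outer m k = phase_inner m k * (4 * real m + 2) / (2 * real m)"
    using m by (simp add: phase_outer_def phase_gap_def field_simps)
  moreover have "phase_inner m k * (4 * real m + 2) < phase_inner m i * (4 * real m - 1)"
  proof -
    have "phase_inner m k * (4 * real m + 2) < (phase_inner m k + 1) * (4 * real m - 1)"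
      using inner_k by (simp add: algebra_simps)
    also have "\<dots> \<le> phase_inner m i * (4 * real m - 1)"
      using inner_i m by (intro mult_right_mono) auto
    finally show ?thesis .
  qed
  ultimately show ?thesis using m by (simp add: divide_strict_right_mono)
qed

lemma length_phase_state: "length (phase_state s m k j) = (if j = 0 then k else Suc k)"
  by (simp add: phase_state_def)

lemma nth_phase_state_retired:
  "i < k \<Longrightarrow> phase_state s m k j ! i = (s + phase_outer m i, retired_load m i)"
  by (simp add: phase_state_def nth_append)

lemma nth_phase_state_active:
  "0 < j \<Longrightarrow> phase_state s m k j ! k = (s + phase_point m k (j - 1), active_load m k j)"
  by (simp add: phase_state_def nth_append)

lemma cand_phase_state_retired:
  assumes "i < k" "k < m"
  shows "2 * phase_outer m k < cand (phase_state s m k j) s r i"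
proof -
  have "cand (phase_state s m k j) s r i = retired_load m i + 2 * \<bar>s + phase_outer m i - r\<bar>"
    using assms by (simp add: cand_def length_phase_state nth_phase_state_retired)
  moreover have "0 \<le> \<bar>s + phase_outer m i - r\<bar>" by simp
  ultimately show ?thesis using retired_load_gt_outer[OF assms] by (smt (verit))
qed

lemma cand_phase_state_active:
  assumes "0 < j"
  shows "cand (phase_state s m k j) s (s + phase_point m k j) k =
    phase_inner m k + real (Suc j) * phase_gap m k"
proof -
  have "cand (phase_state s m k j) s (s + phase_point m k j) k =
      active_load m k j + 2 * phase_gap m k"
    using assms phase_point_dist[of m k "j - 1"]
    by (simp add: cand_def length_phase_state nth_phase_state_active)
  with assms show ?thesis by (simp add: active_load_def algebra_simps)
qed

lemma cand_phase_state_unique_min: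
  assumes "k < m" "j < 2 * m" "i \<le> length (phase_state s m k j)" "i \<noteq> k"
  shows "cand (phase_state s m k j) s (s + phase_point m k j) k <
    cand (phase_state s m k j) s (s + phase_point m k j) i"
proof -
  let ?c = "cand (phase_state s m k j) s (s + phase_point m k j)"
  have gap: "0 < phase_gap m k" using assms(1) by (rule phase_gap_pos)
  have inner: "phase_inner m k = 2 * real m * phase_gap m k"
    using assms(1) by (simp add: phase_inner_eq_gap)
  have ck_le: "?c k \<le> 2 * phase_inner m k"
  proof (cases "j = 0")
    case True
    then show ?thesis by (simp add: cand_def length_phase_state phase_point_def phase_inner_nonneg)
  next
    case False
    have "real (Suc j) * phase_gap m k \<le> 2 * real m * phase_gap m k"
      using assms(2) gap by (intro mult_right_mono) auto
    with False show ?thesis by (simp add: cand_phase_state_active inner)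
  qed
  have ck_outer: "?c k < 2 * phase_outer m k"
    using ck_le gap by (simp add: phase_outer_def)
  consider "i < k" | "j \<noteq> 0" "i = Suc k"
    using assms(3,4) by (fastforce simp: length_phase_state split: if_splits)
  then show ?thesis
  proof cases
    case 1
    then show ?thesis
      using cand_phase_state_retired[OF 1 assms(1), where s = s and j = j and r = "s + phase_point m k j"]
        ck_outer
      by linarith
  next
    case 2
    then have fresh: "?c i = 2 * phase_point m k j"
      by (simp add: cand_def length_phase_state phase_point_nonneg)
    show ?thesis
    proof (cases "even j")
      case True
      with assms(2) have "Suc j < 2 * m" by presburger
      then have "real (Suc j) * phase_gap m k < 2 * real m * phase_gap m k"
        using gap by (intro mult_strict_right_mono) auto
      moreover have "?c k = phase_inner m k + real (Suc j) * phase_gap m k"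
        using 2 by (simp add: cand_phase_state_active)
      moreover have "?c i = 2 * phase_inner m k"
        using fresh True by (simp add: phase_point_def)
      ultimately show ?thesis using inner by linarith
    next
      case False
      then show ?thesis using ck_outer fresh by (simp add: phase_point_def)
    qed
  qed
qed

lemma move_phase_state:
  assumes "0 < m" "j < 2 * m"
  shows "move_state (phase_state s m k j) s (s + phase_point m k j) k = phase_state s m k (Suc j)"
    and "phase_cost m k j + move_cost (phase_state s m k j) s (s + phase_point m k j) k =
      phase_cost m k (Suc j)"
proof -
  show "move_state (phase_state s m k j) s (s + phase_point m k j) k = phase_state s m k (Suc j)"
  proof (cases "j = 0")
    case True
    then show ?thesis
      by (simp add: move_state_def phase_state_def active_load_def phase_point_def phase_inner_nonneg)
  next
    case False
    then show ?thesis
      using phase_point_dist[of m k "j - 1"]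
      by (simp add: move_state_def phase_state_def nth_append list_update_append active_load_def
          algebra_simps)
  qed
  show "phase_cost m k j + move_cost (phase_state s m k j) s (s + phase_point m k j) k =
      phase_cost m k (Suc j)"
  proof (cases "j = 0")
    case True
    then show ?thesis
      by (simp add: move_cost_def phase_cost_def length_phase_state active_load_def phase_point_def
          phase_inner_nonneg)
  next
    case False
    then show ?thesis
      using phase_point_dist[of m k "j - 1"]
      by (simp add: move_cost_def phase_cost_def length_phase_state nth_phase_state_active
          active_load_def algebra_simps)
  qed
qed

lemma phase_state_end:
  assumes "0 < m"
  shows "phase_state s m k (2 * m) = phase_state s m (Suc k) 0"
    and "phase_cost m k (2 * m) = phase_cost m (Suc k) 0"
proof -
  have "odd (2 * m - 1)" using assms by presburger
  then show "phase_state s m k (2 * m) = phase_state s m (Suc k) 0"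
    using assms by (simp add: phase_state_def phase_point_def retired_load_def)
  show "phase_cost m k (2 * m) = phase_cost m (Suc k) 0"
    using assms by (simp add: phase_cost_def retired_load_def)
qed

lemma length_adversary: "length (adversary s m) = m * (2 * m)"
  by (simp add: adversary_def)

lemma phase_index_less:
  fixes k m j :: nat
  assumes "k < m" "j < 2 * m"
  shows "k * (2 * m) + j < m * (2 * m)"
proof -
  have "k * (2 * m) + j < Suc k * (2 * m)" using assms(2) by simp
  also have "\<dots> \<le> m * (2 * m)" using assms(1) by (intro mult_right_mono) auto
  finally show ?thesis .
qed

lemma nth_adversary:
  assumes "k < m" "j < 2 * m"
  shows "adversary s m ! (k * (2 * m) + j) = s + phase_point m k j"
proof -
  have "k * (2 * m) + j < m * (2 * m)"
    using assms by (rule phase_index_less)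
  moreover have "phase_point m k (k * (2 * m) + j) = phase_point m k j"
    by (simp add: phase_point_def)
  ultimately show ?thesis
    using assms by (simp add: adversary_def)
qed

lemma bal_exec_Suc_unique_min:
  assumes pol: "balance2_policy s pol" and "n < length \<sigma>"
    and exec: "bal_exec s pol \<sigma> n = (st, c)" and "\<sigma> ! n = r"
    and "i \<le> length st"
    and min: "\<And>j. j \<le> length st \<Longrightarrow> j \<noteq> i \<Longrightarrow> cand st s r i < cand st s r j"
  shows "bal_exec s pol \<sigma> (Suc n) = (move_state st s r i, c + move_cost st s r i)"
proof -
  have "pol (take n \<sigma>) r \<le> length st \<and>
      (\<forall>j \<le> length st. cand st s r (pol (take n \<sigma>) r) \<le> cand st s r j)"
    using pol assms(2-4) unfolding balance2_policy_def by (metis fst_conv)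
  then have "pol (take n \<sigma>) r = i"
    using assms(5) min by (meson not_less)
  then show ?thesis using exec assms(4) by simp
qed

lemma bal_exec_adversary_phase:
  assumes pol: "balance2_policy s pol" and "k < m" "j \<le> 2 * m"
    and start: "bal_exec s pol (adversary s m) (k * (2 * m)) = (phase_state s m k 0, phase_cost m k 0)"
  shows "bal_exec s pol (adversary s m) (k * (2 * m) + j) = (phase_state s m k j, phase_cost m k j)"
  using assms(3)
proof (induction j)
  case 0
  then show ?case using start by simp
next
  case (Suc j)
  have j: "j < 2 * m" using Suc.prems by simp
  have "k * (2 * m) + j < length (adversary s m)"
    using phase_index_less[OF assms(2) j] by (simp add: length_adversary)
  then have "bal_exec s pol (adversary s m) (Suc (k * (2 * m) + j)) =
      (move_state (phase_state s m k j) s (s + phase_point m k j) k,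
       phase_cost m k j + move_cost (phase_state s m k j) s (s + phase_point m k j) k)"
    using Suc j assms(2)
    by (intro bal_exec_Suc_unique_min[OF pol])
       (auto simp: nth_adversary length_phase_state cand_phase_state_unique_min)
  then show ?case
    using assms(2) j by (simp add: move_phase_state)
qed

lemma bal_exec_adversary_start:
  assumes pol: "balance2_policy s pol" and "k \<le> m"
  shows "bal_exec s pol (adversary s m) (k * (2 * m)) = (phase_state s m k 0, phase_cost m k 0)"
  using assms(2)
proof (induction k)
  case 0
  then show ?case by (simp add: phase_state_def phase_cost_def)
next
  case (Suc k)
  then have "k < m" by simp
  then have "bal_exec s pol (adversary s m) (k * (2 * m) + 2 * m) =
      (phase_state s m k (2 * m), phase_cost m k (2 * m))"
    using Suc by (intro bal_exec_adversary_phase[OF pol]) auto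
  then show ?case
    using \<open>k < m\<close> by (simp add: phase_state_end add.commute)
qed

lemma balance2_cost_adversary:
  assumes "balance2_policy s pol"
  shows "balance2_cost s pol (adversary s m) = (\<Sum>k<m. retired_load m k)"
  using bal_exec_adversary_start[OF assms order_refl]
  by (simp add: balance2_cost_def length_adversary phase_cost_def)

lemma retired_load_sum_ge: "real m * (real m + 1) / 2 \<le> (\<Sum>k<m. retired_load m k)"
proof -
  have "(\<Sum>k<m. real (m - k)) = (\<Sum>k<m. real (Suc k))"
    using sum.nat_diff_reindex[where g = "\<lambda>k. real (Suc k)" and n = m] by (simp add: Suc_diff_Suc)
  also have "\<dots> = real m * (real m + 1) / 2"
    by (induction m) (simp_all add: field_simps)
  finally have "(\<Sum>k<m. real (m - k)) = real m * (real m + 1) / 2" .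
  moreover have "(\<Sum>k<m. real (m - k)) \<le> (\<Sum>k<m. retired_load m k)"
    by (intro sum_mono) (simp add: retired_load_def active_load_def phase_inner_def phase_gap_nonneg)
  ultimately show ?thesis by simp
qed

lemma prev_pos_mod_2: "prev_pos s \<sigma> (\<lambda>i. i mod 2) i = (if i < 2 then s else \<sigma> ! (i - 2))"
proof (cases "i < 2")
  case True
  then have "i = 0 \<or> i = 1" by auto
  then have "\<not> (\<exists>j<i. j mod 2 = i mod 2)" by auto
  with True show ?thesis unfolding prev_pos_def by (simp only: if_False if_True)
next
  case False
  have earlier: "i - 2 < i \<and> (i - 2) mod 2 = i mod 2"
    using False by (simp add: mod2_eq_if)
  have "(GREATEST j. j < i \<and> j mod 2 = i mod 2) = i - 2"
    by (rule Greatest_equality[where P = "\<lambda>j. j < i \<and> j mod 2 = i mod 2", OF earlier]) presburger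
  with earlier False show ?thesis by (auto simp: prev_pos_def)
qed

lemma sum_chain_increments:
  fixes x :: "nat \<Rightarrow> real"
  shows "(\<Sum>i<n + 2. if i < 2 then x i else x (i - 2) - x i) = 2 * x 0 + 2 * x 1 - x n - x (n + 1)"
  by (induction n) (simp_all add: numeral_2_eq_2)

lemma offline_cost_two_chains:
  fixes x :: "nat \<Rightarrow> real"
  assumes nonneg: "\<And>i. 0 \<le> x i" and anti: "\<And>i. x (i + 2) \<le> x i"
  shows "offline_cost s (map (\<lambda>i. s + x i) [0..<n]) (\<lambda>i. i mod 2) \<le> 2 * (x 0 + x 1)"
proof -
  have anti2: "x i \<le> x (i - 2)" if "2 \<le> i" for i
    using anti[of "i - 2"] that by (metis le_add_diff_inverse2)
  define inc where "inc i = (if i < 2 then x i else x (i - 2) - x i)" for i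
  have inc_nonneg: "0 \<le> inc i" for i
    using nonneg[of i] anti2[of i] by (simp add: inc_def)
  have "offline_cost s (map (\<lambda>i. s + x i) [0..<n]) (\<lambda>i. i mod 2) = (\<Sum>i<n. inc i)"
    unfolding offline_cost_def
    by (intro sum.cong) (auto simp: prev_pos_mod_2 inc_def nonneg anti2)
  also have "\<dots> \<le> (\<Sum>i<n + 2. inc i)"
    by (intro sum_mono2) (auto simp: inc_nonneg)
  also have "\<dots> = 2 * x 0 + 2 * x 1 - x n - x (n + 1)"
    unfolding inc_def by (rule sum_chain_increments)
  also have "\<dots> \<le> 2 * (x 0 + x 1)"
    using nonneg[of n] nonneg[of "n + 1"] by simp
  finally show ?thesis .
qed

lemma opt_cost_nonneg: "0 \<le> opt_cost s \<sigma>"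
  unfolding opt_cost_def offline_cost_def by (rule cInf_greatest) (auto intro: sum_nonneg)

lemma opt_cost_le_offline_cost: "opt_cost s \<sigma> \<le> offline_cost s \<sigma> f"
proof -
  have "bdd_below (range (offline_cost s \<sigma>))"
    by (rule bdd_belowI[of _ 0]) (auto simp: offline_cost_def intro: sum_nonneg)
  then show ?thesis unfolding opt_cost_def by (rule cInf_lower[rotated]) simp
qed

lemma opt_cost_adversary_le:
  assumes "0 < m"
  shows "opt_cost s (adversary s m) \<le> 4 * real m + 1"
proof -
  define x where "x i = phase_point m (i div (2 * m)) i" for i
  have anti: "x (i + 2) \<le> x i" for i
  proof -
    have "i div (2 * m) \<le> (i + 2) div (2 * m)" by (rule div_le_mono) simp
    then show ?thesis
      by (simp add: x_def phase_point_def phase_inner_antimono phase_outer_antimono)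
  qed
  have nonneg: "0 \<le> x i" for i
    by (simp add: x_def phase_point_nonneg)
  have "adversary s m = map (\<lambda>i. s + x i) [0..<m * (2 * m)]"
    by (simp add: adversary_def x_def)
  then have "opt_cost s (adversary s m) \<le> 2 * (x 0 + x 1)"
    using opt_cost_le_offline_cost offline_cost_two_chains[where x = x, OF nonneg anti]
    by (metis order_trans)
  also have "x 0 + x 1 = 2 * real m + 1 / 2"
    using assms by (simp add: x_def phase_point_def phase_outer_def phase_gap_def phase_inner_def)
  finally show ?thesis by simp
qed

lemma quadratic_exceeds_linear:
  fixes a b x :: real
  assumes "0 \<le> a" "0 \<le> b" "10 * a + 2 * b + 1 \<le> x"
  shows "a * (4 * x + 1) + b < x * (x + 1) / 2"
proof -
  have x: "1 \<le> x" using assms by linarith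
  have "x * (10 * a + 2 * b + 1) \<le> x * x"
    using assms(3) x by (intro mult_left_mono) auto
  moreover have "a \<le> a * x" "b \<le> b * x"
    using assms(1,2) x by (simp_all add: mult_le_cancel_left1)
  ultimately show ?thesis using x by (simp add: algebra_simps)
qed

theorem proposition5:
  fixes s :: real and pol :: policy
  assumes "balance2_policy s pol"
  shows "\<not> (\<exists>\<rho> c. \<forall>\<sigma>. balance2_cost s pol \<sigma> \<le> \<rho> * opt_cost s \<sigma> + c)"
proof
  assume "\<exists>\<rho> c. \<forall>\<sigma>. balance2_cost s pol \<sigma> \<le> \<rho> * opt_cost s \<sigma> + c"
  then obtain \<rho> c where bound: "\<And>\<sigma>. balance2_cost s pol \<sigma> \<le> \<rho> * opt_cost s \<sigma> + c" by blast
  obtain m :: nat where m: "10 * \<bar>\<rho>\<bar> + 2 * \<bar>c\<bar> + 1 \<le> real m" by (meson real_arch_simple)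
  then have "0 < m" by (smt (verit) of_nat_0_less_iff)
  let ?\<sigma> = "adversary s m"
  have "real m * (real m + 1) / 2 \<le> balance2_cost s pol ?\<sigma>"
    using retired_load_sum_ge by (simp add: balance2_cost_adversary[OF assms])
  also have "\<dots> \<le> \<rho> * opt_cost s ?\<sigma> + c" by (rule bound)
  also have "\<dots> \<le> \<bar>\<rho>\<bar> * (4 * real m + 1) + \<bar>c\<bar>"
  proof -
    have "\<rho> * opt_cost s ?\<sigma> \<le> \<bar>\<rho>\<bar> * opt_cost s ?\<sigma>"
      using opt_cost_nonneg by (intro mult_right_mono) auto
    also have "\<dots> \<le> \<bar>\<rho>\<bar> * (4 * real m + 1)"
      using opt_cost_adversary_le[OF \<open>0 < m\<close>] by (intro mult_left_mono) auto
    finally show ?thesis by linarith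
  qed
  finally show False
    using quadratic_exceeds_linear[OF abs_ge_zero abs_ge_zero m] by linarith
qed

end
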